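(* For the SVIQR system, the point $E^0$ with $S_k=S_k^0=\frac{\Lambda_k(d+\omega+\alpha)}{(d+\omega+\alpha)d+(d+\alpha)\mu_k}$, $V_k=V_k^0=\frac{\Lambda_k\mu_k}{(d+\omega+\alpha)d+(d+\alpha)\mu_k}$, $I_k=Q_k=0$, $R_k=R_k^0=\frac{\alpha}{d}V_k^0$ ($k=1,\dots,n$) is always an equilibrium, and it is the only equilibrium with $\Theta=0$. Define $$R_0=\frac{1}{\langle k\rangle}\sum_{k=1}^n\varphi(k)p(k)\lambda(k)\frac{\Lambda_k\,(d+\omega+\alpha+\delta\mu_k)}{(\gamma+\beta+d)\big[(d+\alpha+\omega)d+(d+\alpha)\mu_k\big]}.$$ Then the SVIQR system has an equilibrium with nonnegative components and $\Theta>0$ (an endemic equilibrium, in which $I_k>0$ for all $k$) if and only if $R_0>1$, and in that case this endemic equilibrium $E^*$ is unique.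
   Context: Fix an integer $n\ge1$ and numbers $p(1),\dots,p(n)>0$ with $\sum_{k=1}^n p(k)=1$; set $\langle k\rangle=\sum_{k=1}^n kp(k)$. Fix constants $b>d>0$ and let $\Phi^*>0$ satisfy $\Phi^*=\frac{1}{\langle k\rangle}\sum_{i=1}^n \frac{i\,p(i)\,b\Phi^*}{d+bi\Phi^*}$. For $k=1,\dots,n$ put $N_k^*=\frac{bk\Phi^*}{d+bk\Phi^*}\in(0,1)$ and $\Lambda_k=bk(1-N_k^* )\Phi^*$ (so $\Lambda_k=dN_k^*>0$). Parameters: $\lambda(k)>0$, $\varphi(k)>0$, $\mu_k>0$ for $k=1,\dots,n$; constants $\alpha,\beta,\gamma,\eta,\omega>0$ and $\delta\in[0,1]$. Write $\xi=\gamma+\beta+d$. For functions $I_1(t),\dots,I_n(t)$ set $\Theta(t)=\frac{1}{\langle k\rangle}\sum_{i=1}^n\varphi(i)p(i)I_i(t)$. The SVIQR system is, for $k=1,\dots,n$: $S_k'=\Lambda_k-\lambda(k)S_k\Theta+\omega V_k-(\mu_k+d)S_k$, $V_k'=\mu_kS_k-\delta\lambda(k)V_k\Theta-(d+\omega+\alpha)V_k$, $I_k'=\lambda(k)S_k\Theta+\delta\lambda(k)V_k\Theta-(\gamma+\beta+d)I_k$, $Q_k'=\beta I_k-(\eta+d)Q_k$, $R_k'=\gamma I_k+\eta Q_k+\alpha V_k-dR_k$. An equilibrium is a point where all these right-hand sides vanish. *)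

theory Defs
  imports Complex_Main
begin

definition kmean :: "nat \<Rightarrow> (nat \<Rightarrow> real) \<Rightarrow> real" where
  "kmean n p = (\<Sum>k=1..n. real k * p k)"

definition Theta :: "nat \<Rightarrow> (nat \<Rightarrow> real) \<Rightarrow> (nat \<Rightarrow> real) \<Rightarrow> (nat \<Rightarrow> real) \<Rightarrow> real" where
  "Theta n p phi I = (1 / kmean n p) * (\<Sum>i=1..n. phi i * p i * I i)"

definition Nstar :: "real \<Rightarrow> real \<Rightarrow> real \<Rightarrow> nat \<Rightarrow> real" where
  "Nstar b d Phi k = b * real k * Phi / (d + b * real k * Phi)"

definition Lam :: "real \<Rightarrow> real \<Rightarrow> real \<Rightarrow> nat \<Rightarrow> real" where
  "Lam b d Phi k = b * real k * (1 - Nstar b d Phi k) * Phi"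

definition sviqr_equilibrium ::
  "nat \<Rightarrow> (nat \<Rightarrow> real) \<Rightarrow> real \<Rightarrow> real \<Rightarrow> real \<Rightarrow>
   (nat \<Rightarrow> real) \<Rightarrow> (nat \<Rightarrow> real) \<Rightarrow> (nat \<Rightarrow> real) \<Rightarrow>
   real \<Rightarrow> real \<Rightarrow> real \<Rightarrow> real \<Rightarrow> real \<Rightarrow> real \<Rightarrow>
   (nat \<Rightarrow> real) \<Rightarrow> (nat \<Rightarrow> real) \<Rightarrow> (nat \<Rightarrow> real) \<Rightarrow> (nat \<Rightarrow> real) \<Rightarrow> (nat \<Rightarrow> real) \<Rightarrow> bool"
where
  "sviqr_equilibrium n p b d Phi lam phi mu alpha beta gamma eta omega delta S V I Q R \<longleftrightarrow>
     (\<forall>k\<in>{1..n}.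
        Lam b d Phi k - lam k * S k * Theta n p phi I + omega * V k - (mu k + d) * S k = 0 \<and>
        mu k * S k - delta * lam k * V k * Theta n p phi I - (d + omega + alpha) * V k = 0 \<and>
        lam k * S k * Theta n p phi I + delta * lam k * V k * Theta n p phi I
          - (gamma + beta + d) * I k = 0 \<and>
        beta * I k - (eta + d) * Q k = 0 \<and>
        gamma * I k + eta * Q k + alpha * V k - d * R k = 0)"

definition R0 ::
  "nat \<Rightarrow> (nat \<Rightarrow> real) \<Rightarrow> real \<Rightarrow> real \<Rightarrow> real \<Rightarrow>
   (nat \<Rightarrow> real) \<Rightarrow> (nat \<Rightarrow> real) \<Rightarrow> (nat \<Rightarrow> real) \<Rightarrow>
   real \<Rightarrow> real \<Rightarrow> real \<Rightarrow> real \<Rightarrow> real \<Rightarrow> real"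
where
  "R0 n p b d Phi lam phi mu alpha beta gamma omega delta =
     (1 / kmean n p) * (\<Sum>k=1..n. phi k * p k * lam k *
        (Lam b d Phi k * (d + omega + alpha + delta * mu k)) /
        ((gamma + beta + d) * ((d + alpha + omega) * d + (d + alpha) * mu k)))"

definition S0 :: "real \<Rightarrow> real \<Rightarrow> real \<Rightarrow> (nat \<Rightarrow> real) \<Rightarrow> real \<Rightarrow> real \<Rightarrow> nat \<Rightarrow> real" where
  "S0 b d Phi mu alpha omega k =
     Lam b d Phi k * (d + omega + alpha) / ((d + omega + alpha) * d + (d + alpha) * mu k)"

definition V0 :: "real \<Rightarrow> real \<Rightarrow> real \<Rightarrow> (nat \<Rightarrow> real) \<Rightarrow> real \<Rightarrow> real \<Rightarrow> nat \<Rightarrow> real" where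
  "V0 b d Phi mu alpha omega k =
     Lam b d Phi k * mu k / ((d + omega + alpha) * d + (d + alpha) * mu k)"

definition R0comp :: "real \<Rightarrow> real \<Rightarrow> real \<Rightarrow> (nat \<Rightarrow> real) \<Rightarrow> real \<Rightarrow> real \<Rightarrow> nat \<Rightarrow> real" where
  "R0comp b d Phi mu alpha omega k = alpha / d * V0 b d Phi mu alpha omega k"

end

theory Submission
  imports Defs
begin

text \<open>Fix a value \<open>\<theta> \<ge> 0\<close> of the force of infection \<open>\<Theta>\<close>. The equilibrium equations then
  become linear in \<open>(S, V, I, Q, R)\<close> and have exactly one solution, which is
  nonnegative. Feeding it back into \<open>\<Theta>\<close>, equilibria correspond to the roots of
  \<open>\<theta> = \<theta> Reff(\<theta>)\<close>, where \<open>Reff(\<theta>)\<close> weights the effective susceptible masses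
  \<open>S_k + \<delta> V_k\<close> of the classes. The root \<open>\<theta> = 0\<close> gives \<open>E\<^sup>0\<close>. Since \<open>Reff\<close> is
  continuous and strictly decreasing on \<open>[0, \<infinity>)\<close> with \<open>Reff(0) = R\<^sub>0\<close>, and
  \<open>\<theta> Reff(\<theta>)\<close> stays bounded (no class is infected faster than it is recruited),
  \<open>Reff(\<theta>) = 1\<close> has a positive root exactly when \<open>R\<^sub>0 > 1\<close>, and then only one.\<close>

lemma Lam_pos:
  assumes "b > 0" "d > 0" "Phi > 0" "k > 0"
  shows "Lam b d Phi k > 0"
proof -
  have "b * real k * Phi > 0" using assms by simp
  moreover have "Lam b d Phi k = b * real k * Phi * d / (d + b * real k * Phi)"
    using calculation assms(2) unfolding Lam_def Nstar_def by (simp add: field_simps)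
  ultimately show ?thesis using assms(2) by simp
qed

locale sviqr =
  fixes n :: nat and p :: "nat \<Rightarrow> real" and b d Phi :: real
    and lam phi mu :: "nat \<Rightarrow> real"
    and alpha beta gamma eta omega delta :: real
  assumes n_pos: "n \<ge> 1"
    and p_pos: "\<forall>k\<in>{1..n}. p k > 0"
    and b_pos: "b > 0" and d_pos: "d > 0" and Phi_pos: "Phi > 0"
    and lam_pos: "\<forall>k\<in>{1..n}. lam k > 0"
    and phi_pos: "\<forall>k\<in>{1..n}. phi k > 0"
    and mu_nonneg: "\<forall>k\<in>{1..n}. mu k \<ge> 0"
    and rates_nonneg: "alpha \<ge> 0" "beta \<ge> 0" "gamma \<ge> 0" "eta \<ge> 0" "omega \<ge> 0" "delta \<ge> 0"
begin

abbreviation equilibrium where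
  "equilibrium \<equiv> sviqr_equilibrium n p b d Phi lam phi mu alpha beta gamma eta omega delta"

abbreviation \<Lambda> :: "nat \<Rightarrow> real" where "\<Lambda> k \<equiv> Lam b d Phi k"

abbreviation \<xi> :: real where "\<xi> \<equiv> gamma + beta + d"

abbreviation R\<^sub>0 :: real where "R\<^sub>0 \<equiv> R0 n p b d Phi lam phi mu alpha beta gamma omega delta"

text \<open>The profile of an equilibrium whose force of infection \<open>Theta\<close> equals \<open>\<theta>\<close>: the
  \<open>V\<close>-equation gives \<open>V = \<mu> S / V_outflow\<close>, and substituting it into the \<open>S\<close>-equation
  leaves \<open>\<Lambda> = S_net_outflow * S\<close>.\<close>

definition V_outflow :: "real \<Rightarrow> nat \<Rightarrow> real" where
  "V_outflow \<theta> k = delta * lam k * \<theta> + (d + omega + alpha)"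

definition S_net_outflow :: "real \<Rightarrow> nat \<Rightarrow> real" where
  "S_net_outflow \<theta> k = lam k * \<theta> + mu k + d - omega * mu k / V_outflow \<theta> k"

definition S_eq :: "real \<Rightarrow> nat \<Rightarrow> real" where
  "S_eq \<theta> k = \<Lambda> k / S_net_outflow \<theta> k"

definition V_eq :: "real \<Rightarrow> nat \<Rightarrow> real" where
  "V_eq \<theta> k = mu k * S_eq \<theta> k / V_outflow \<theta> k"

definition eff_susc :: "real \<Rightarrow> nat \<Rightarrow> real" where
  "eff_susc \<theta> k = S_eq \<theta> k + delta * V_eq \<theta> k"

definition I_eq :: "real \<Rightarrow> nat \<Rightarrow> real" where
  "I_eq \<theta> k = lam k * \<theta> * eff_susc \<theta> k / \<xi>"

definition Q_eq :: "real \<Rightarrow> nat \<Rightarrow> real" where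
  "Q_eq \<theta> k = beta * I_eq \<theta> k / (eta + d)"

definition R_eq :: "real \<Rightarrow> nat \<Rightarrow> real" where
  "R_eq \<theta> k = (gamma * I_eq \<theta> k + eta * Q_eq \<theta> k + alpha * V_eq \<theta> k) / d"

definition Reff :: "real \<Rightarrow> real" where
  "Reff \<theta> = 1 / kmean n p * (\<Sum>k=1..n. phi k * p k * lam k * eff_susc \<theta> k / \<xi>)"

lemma kmean_pos: "kmean n p > 0"
  unfolding kmean_def using n_pos p_pos by (intro sum_pos) auto

lemma \<xi>_pos: "\<xi> > 0"
  using d_pos rates_nonneg by linarith

lemma \<Lambda>_pos: "k \<in> {1..n} \<Longrightarrow> \<Lambda> k > 0"
  using Lam_pos b_pos d_pos Phi_pos by simp

lemma V_outflow_ge: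
  assumes "k \<in> {1..n}" "\<theta> \<ge> 0"
  shows "V_outflow \<theta> k \<ge> d + omega + alpha"
proof -
  have "lam k > 0" using assms(1) lam_pos by simp
  then have "delta * lam k * \<theta> \<ge> 0" using assms(2) rates_nonneg by simp
  then show ?thesis unfolding V_outflow_def by simp
qed

lemma V_outflow_pos: "k \<in> {1..n} \<Longrightarrow> \<theta> \<ge> 0 \<Longrightarrow> V_outflow \<theta> k > 0"
  using V_outflow_ge[of k \<theta>] d_pos rates_nonneg by linarith

lemma S_net_outflow_gt:
  assumes "k \<in> {1..n}" "\<theta> \<ge> 0"
  shows "S_net_outflow \<theta> k > lam k * \<theta>"
proof -
  have "omega * mu k \<le> V_outflow \<theta> k * mu k"
    using V_outflow_ge[OF assms] assms d_pos rates_nonneg mu_nonneg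
    by (intro mult_right_mono) auto
  then have "omega * mu k / V_outflow \<theta> k \<le> mu k"
    using V_outflow_pos[OF assms] by (simp add: divide_le_eq mult.commute)
  then show ?thesis unfolding S_net_outflow_def using d_pos by linarith
qed

lemma S_net_outflow_pos:
  assumes "k \<in> {1..n}" "\<theta> \<ge> 0"
  shows "S_net_outflow \<theta> k > 0"
proof -
  have "lam k > 0" using assms(1) lam_pos by simp
  with assms(2) have "lam k * \<theta> \<ge> 0" by simp
  with S_net_outflow_gt[OF assms] show ?thesis by linarith
qed

lemma equations_at_level_iff:
  fixes S V I Q R :: real
  assumes k: "k \<in> {1..n}" and \<theta>: "\<theta> \<ge> 0"
  shows "(\<Lambda> k - lam k * S * \<theta> + omega * V - (mu k + d) * S = 0 \<and>
          mu k * S - delta * lam k * V * \<theta> - (d + omega + alpha) * V = 0 \<and>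
          lam k * S * \<theta> + delta * lam k * V * \<theta> - \<xi> * I = 0 \<and>
          beta * I - (eta + d) * Q = 0 \<and>
          gamma * I + eta * Q + alpha * V - d * R = 0)
     \<longleftrightarrow> S = S_eq \<theta> k \<and> V = V_eq \<theta> k \<and> I = I_eq \<theta> k \<and> Q = Q_eq \<theta> k \<and> R = R_eq \<theta> k"
    (is "?eqs \<longleftrightarrow> ?profile")
proof -
  have Vo: "V_outflow \<theta> k > 0" and So: "S_net_outflow \<theta> k > 0"
    using V_outflow_pos S_net_outflow_pos k \<theta> by auto
  have V_iff: "mu k * S - delta * lam k * V * \<theta> - (d + omega + alpha) * V = 0
      \<longleftrightarrow> V = mu k * S / V_outflow \<theta> k"
    using Vo unfolding V_outflow_def by (auto simp: field_simps)
  have S_iff: "\<Lambda> k - lam k * S * \<theta> + omega * V - (mu k + d) * S = 0 \<longleftrightarrow> S = S_eq \<theta> k"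
    if "V = mu k * S / V_outflow \<theta> k"
  proof -
    have "\<Lambda> k - lam k * S * \<theta> + omega * V - (mu k + d) * S = \<Lambda> k - S_net_outflow \<theta> k * S"
      using that unfolding S_net_outflow_def by (simp add: algebra_simps)
    then show ?thesis using So unfolding S_eq_def by (auto simp: field_simps)
  qed
  have I_iff: "lam k * S * \<theta> + delta * lam k * V * \<theta> - \<xi> * I = 0
      \<longleftrightarrow> I = lam k * \<theta> * (S + delta * V) / \<xi>"
    using \<xi>_pos by (auto simp: field_simps)
  have Q_iff: "beta * I - (eta + d) * Q = 0 \<longleftrightarrow> Q = beta * I / (eta + d)"
    using d_pos rates_nonneg by (auto simp: field_simps)
  have R_iff: "gamma * I + eta * Q + alpha * V - d * R = 0
      \<longleftrightarrow> R = (gamma * I + eta * Q + alpha * V) / d"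
    using d_pos by (auto simp: field_simps)
  show ?thesis
  proof
    assume eqs: ?eqs
    then have V: "V = mu k * S / V_outflow \<theta> k" using V_iff by blast
    with eqs have S: "S = S_eq \<theta> k" using S_iff by blast
    from V S have V': "V = V_eq \<theta> k" unfolding V_eq_def by simp
    from eqs I_iff S V' have I: "I = I_eq \<theta> k" unfolding I_eq_def eff_susc_def by simp
    from eqs Q_iff I have Q: "Q = Q_eq \<theta> k" unfolding Q_eq_def by simp
    from eqs R_iff I Q V' have "R = R_eq \<theta> k" unfolding R_eq_def by simp
    with S V' I Q show ?profile by blast
  next
    assume prof: ?profile
    then have V: "V = mu k * S / V_outflow \<theta> k" unfolding V_eq_def by simp
    have S: "S = S_eq \<theta> k" and I: "I = lam k * \<theta> * (S + delta * V) / \<xi>"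
      and Q: "Q = beta * I / (eta + d)" and R: "R = (gamma * I + eta * Q + alpha * V) / d"
      using prof unfolding I_eq_def eff_susc_def Q_eq_def R_eq_def by simp_all
    show ?eqs using V_iff S_iff[OF V] I_iff Q_iff R_iff V S I Q R by blast
  qed
qed

lemma profile_nonneg:
  assumes k: "k \<in> {1..n}" and \<theta>: "\<theta> \<ge> 0"
  shows "S_eq \<theta> k > 0" "V_eq \<theta> k \<ge> 0" "I_eq \<theta> k \<ge> 0" "Q_eq \<theta> k \<ge> 0" "R_eq \<theta> k \<ge> 0"
    and "\<theta> > 0 \<Longrightarrow> I_eq \<theta> k > 0"
proof -
  have Vo: "V_outflow \<theta> k > 0" and So: "S_net_outflow \<theta> k > 0"
    using V_outflow_pos S_net_outflow_pos k \<theta> by auto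
  have l: "lam k > 0" and m: "mu k \<ge> 0" using k lam_pos mu_nonneg by auto
  show S: "S_eq \<theta> k > 0" unfolding S_eq_def using \<Lambda>_pos[OF k] So by simp
  show V: "V_eq \<theta> k \<ge> 0" unfolding V_eq_def using S Vo m by simp
  have E: "eff_susc \<theta> k > 0"
    unfolding eff_susc_def using S V rates_nonneg by (simp add: add_pos_nonneg)
  show I: "I_eq \<theta> k \<ge> 0" unfolding I_eq_def using E l \<theta> \<xi>_pos by simp
  show Q: "Q_eq \<theta> k \<ge> 0" unfolding Q_eq_def using I rates_nonneg d_pos by simp
  show "R_eq \<theta> k \<ge> 0" unfolding R_eq_def using I Q V rates_nonneg d_pos by simp
  show "\<theta> > 0 \<Longrightarrow> I_eq \<theta> k > 0" unfolding I_eq_def using E l \<xi>_pos by simp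
qed

lemma Theta_I_eq:
  assumes "\<forall>k\<in>{1..n}. I k = I_eq \<theta> k"
  shows "Theta n p phi I = \<theta> * Reff \<theta>"
proof -
  have "Theta n p phi I = 1 / kmean n p * (\<Sum>k=1..n. phi k * p k * I_eq \<theta> k)"
    unfolding Theta_def using assms by simp
  also have "\<dots> = \<theta> * Reff \<theta>"
    unfolding Reff_def I_eq_def by (simp add: sum_distrib_left sum_divide_distrib algebra_simps)
  finally show ?thesis .
qed

lemma equilibrium_at_level_iff:
  assumes \<theta>: "\<theta> \<ge> 0"
  shows "equilibrium S V I Q R \<and> Theta n p phi I = \<theta> \<longleftrightarrow>
    (\<forall>k\<in>{1..n}. S k = S_eq \<theta> k \<and> V k = V_eq \<theta> k \<and> I k = I_eq \<theta> k
                 \<and> Q k = Q_eq \<theta> k \<and> R k = R_eq \<theta> k) \<and> \<theta> * Reff \<theta> = \<theta>"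
    (is "_ \<longleftrightarrow> ?profile \<and> _")
proof
  assume eq: "equilibrium S V I Q R \<and> Theta n p phi I = \<theta>"
  then have ?profile
    using equations_at_level_iff[OF _ \<theta>] unfolding sviqr_equilibrium_def by auto
  moreover from this have "Theta n p phi I = \<theta> * Reff \<theta>"
    using Theta_I_eq[of I \<theta>] by blast
  ultimately show "?profile \<and> \<theta> * Reff \<theta> = \<theta>" using eq by simp
next
  assume prof: "?profile \<and> \<theta> * Reff \<theta> = \<theta>"
  then have "\<forall>k\<in>{1..n}. I k = I_eq \<theta> k" by blast
  then have "Theta n p phi I = \<theta> * Reff \<theta>" by (rule Theta_I_eq)
  with prof have "Theta n p phi I = \<theta>" by simp
  with prof show "equilibrium S V I Q R \<and> Theta n p phi I = \<theta>"
    using equations_at_level_iff[OF _ \<theta>] unfolding sviqr_equilibrium_def by auto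
qed

lemma profile_at_0:
  assumes "k \<in> {1..n}"
  shows "S_eq 0 k = S0 b d Phi mu alpha omega k" "V_eq 0 k = V0 b d Phi mu alpha omega k"
    "I_eq 0 k = 0" "Q_eq 0 k = 0" "R_eq 0 k = R0comp b d Phi mu alpha omega k"
proof -
  have "(d + omega + alpha) * d + (d + alpha) * mu k > 0"
    using assms mu_nonneg d_pos rates_nonneg by (simp add: add_pos_nonneg)
  moreover have "d + omega + alpha > 0" using d_pos rates_nonneg by simp
  ultimately have "S_net_outflow 0 k
      = ((d + omega + alpha) * d + (d + alpha) * mu k) / (d + omega + alpha)"
    unfolding S_net_outflow_def V_outflow_def by (simp add: field_simps)
  with \<open>d + omega + alpha > 0\<close> show S: "S_eq 0 k = S0 b d Phi mu alpha omega k"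
    and V: "V_eq 0 k = V0 b d Phi mu alpha omega k"
    unfolding V_eq_def S_eq_def S0_def V0_def V_outflow_def by simp_all
  show "I_eq 0 k = 0" "Q_eq 0 k = 0" unfolding I_eq_def Q_eq_def by simp_all
  then show "R_eq 0 k = R0comp b d Phi mu alpha omega k"
    unfolding R_eq_def R0comp_def V by simp
qed

lemma Reff_0: "Reff 0 = R\<^sub>0"
  unfolding Reff_def R0_def
proof (intro arg_cong[where f = "\<lambda>x. _ * x"] sum.cong refl)
  fix k assume k: "k \<in> {1..n}"
  have D: "(d + alpha + omega) * d + (d + alpha) * mu k
      = (d + omega + alpha) * d + (d + alpha) * mu k"
    by (simp add: algebra_simps)
  have "eff_susc 0 k = (\<Lambda> k * (d + omega + alpha) + delta * (\<Lambda> k * mu k))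
      / ((d + omega + alpha) * d + (d + alpha) * mu k)"
    unfolding eff_susc_def profile_at_0[OF k] S0_def V0_def by (simp add: add_divide_distrib)
  also have "\<dots> = \<Lambda> k * (d + omega + alpha + delta * mu k)
      / ((d + omega + alpha) * d + (d + alpha) * mu k)"
    by (simp add: algebra_simps)
  finally have "eff_susc 0 k = \<dots>" .
  then show "phi k * p k * lam k * eff_susc 0 k / \<xi> =
      phi k * p k * lam k * (\<Lambda> k * (d + omega + alpha + delta * mu k)) /
      (\<xi> * ((d + alpha + omega) * d + (d + alpha) * mu k))"
    unfolding D by (simp add: ac_simps)
qed

lemma Reff_strict_antimono:
  assumes "0 \<le> s" "s < t"
  shows "Reff t < Reff s"
proof -
  have "eff_susc t k < eff_susc s k" if k: "k \<in> {1..n}" for k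
  proof -
    have s: "s \<ge> 0" and t: "t \<ge> 0" using assms by auto
    have l: "lam k > 0" and m: "mu k \<ge> 0" using k lam_pos mu_nonneg by auto
    have Vo: "V_outflow s k \<le> V_outflow t k"
      unfolding V_outflow_def using assms l rates_nonneg by (simp add: mult_left_mono)
    have "omega * mu k / V_outflow t k \<le> omega * mu k / V_outflow s k"
      using Vo V_outflow_pos[OF k s] m rates_nonneg by (simp add: frac_le)
    moreover have "lam k * s < lam k * t" using assms l by simp
    ultimately have "S_net_outflow s k < S_net_outflow t k"
      unfolding S_net_outflow_def by simp
    then have S: "S_eq t k < S_eq s k"
      unfolding S_eq_def using \<Lambda>_pos[OF k] S_net_outflow_pos[OF k s]
      by (simp add: divide_strict_left_mono)
    have "V_eq t k \<le> V_eq s k"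
      unfolding V_eq_def using S Vo V_outflow_pos[OF k s] profile_nonneg(1)[OF k t] m
      by (intro frac_le mult_left_mono) auto
    then have "delta * V_eq t k \<le> delta * V_eq s k"
      using rates_nonneg by (simp add: mult_left_mono)
    with S show ?thesis unfolding eff_susc_def by linarith
  qed
  then have "(\<Sum>k=1..n. phi k * p k * lam k * eff_susc t k / \<xi>)
      < (\<Sum>k=1..n. phi k * p k * lam k * eff_susc s k / \<xi>)"
    using n_pos phi_pos p_pos lam_pos \<xi>_pos
    by (intro sum_strict_mono divide_strict_right_mono mult_strict_left_mono) auto
  then show ?thesis unfolding Reff_def using kmean_pos by (simp add: divide_strict_right_mono)
qed

lemma inj_on_Reff: "inj_on Reff {0..}"
  by (rule inj_onI) (metis atLeast_iff Reff_strict_antimono linorder_neqE_linordered_idom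
      order_less_irrefl)

lemma isCont_Reff:
  assumes "\<theta> \<ge> 0"
  shows "isCont Reff \<theta>"
proof -
  have "isCont (\<lambda>\<theta>. eff_susc \<theta> k) \<theta>" if k: "k \<in> {1..n}" for k
    using V_outflow_pos[OF k assms] S_net_outflow_pos[OF k assms]
    unfolding eff_susc_def S_eq_def V_eq_def S_net_outflow_def V_outflow_def
    by (intro continuous_intros) auto
  then show ?thesis
    unfolding Reff_def[abs_def] using \<xi>_pos by (intro continuous_intros isCont_sum) auto
qed

lemma I_eq_le:
  assumes k: "k \<in> {1..n}" and \<theta>: "\<theta> \<ge> 0"
  shows "I_eq \<theta> k \<le> \<Lambda> k / \<xi>"
proof -
  have "\<Lambda> k - lam k * S_eq \<theta> k * \<theta> + omega * V_eq \<theta> k - (mu k + d) * S_eq \<theta> k = 0"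
    and "mu k * S_eq \<theta> k - delta * lam k * V_eq \<theta> k * \<theta> - (d + omega + alpha) * V_eq \<theta> k = 0"
    using equations_at_level_iff[OF k \<theta>] by blast+
  \<comment> \<open>adding the \<open>S\<close>- and \<open>V\<close>-equations: the infection inflow is recruitment minus deaths\<close>
  then have "lam k * \<theta> * eff_susc \<theta> k = \<Lambda> k - d * S_eq \<theta> k - (d + alpha) * V_eq \<theta> k"
    unfolding eff_susc_def by (simp add: algebra_simps)
  also have "\<dots> \<le> \<Lambda> k"
  proof -
    have "d * S_eq \<theta> k \<ge> 0" "(d + alpha) * V_eq \<theta> k \<ge> 0"
      using profile_nonneg(1,2)[OF k \<theta>] d_pos rates_nonneg by simp_all
    then show ?thesis by linarith
  qed
  finally show ?thesis unfolding I_eq_def using \<xi>_pos by (simp add: divide_right_mono)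
qed

lemma ex_Reff_less_1: "\<exists>T>0. Reff T < 1"
proof -
  define C where "C = 1 / kmean n p * (\<Sum>k=1..n. phi k * p k * (\<Lambda> k / \<xi>))"
  have C: "C \<ge> 0"
    unfolding C_def using kmean_pos phi_pos p_pos \<Lambda>_pos \<xi>_pos
    by (intro mult_nonneg_nonneg sum_nonneg) (auto simp: less_imp_le)
  have bound: "\<theta> * Reff \<theta> \<le> C" if "\<theta> \<ge> 0" for \<theta>
  proof -
    have "\<theta> * Reff \<theta> = 1 / kmean n p * (\<Sum>k=1..n. phi k * p k * I_eq \<theta> k)"
      using Theta_I_eq[of "I_eq \<theta>" \<theta>] unfolding Theta_def by simp
    also have "\<dots> \<le> C"
      unfolding C_def using kmean_pos phi_pos p_pos I_eq_le that
      by (intro mult_left_mono sum_mono) (auto intro!: mult_nonneg_nonneg less_imp_le)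
    finally show ?thesis .
  qed
  have "Reff (C + 1) < 1"
  proof (rule ccontr)
    assume "\<not> Reff (C + 1) < 1"
    then have "C + 1 \<le> (C + 1) * Reff (C + 1)"
      using C mult_left_mono[of 1 "Reff (C + 1)" "C + 1"] by simp
    moreover have "(C + 1) * Reff (C + 1) \<le> C" using C by (intro bound) simp
    ultimately show False by linarith
  qed
  with C show ?thesis by (intro exI[of _ "C + 1"]) simp
qed

lemma Reff_eq_1_iff: "(\<exists>\<theta>>0. Reff \<theta> = 1) \<longleftrightarrow> R\<^sub>0 > 1"
proof
  assume "\<exists>\<theta>>0. Reff \<theta> = 1"
  then show "R\<^sub>0 > 1"
    using Reff_strict_antimono[of 0] Reff_0 by force
next
  assume "R\<^sub>0 > 1"
  moreover obtain T where "T > 0" "Reff T < 1" using ex_Reff_less_1 by blast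
  ultimately obtain \<theta> where "0 \<le> \<theta>" "\<theta> \<le> T" "Reff \<theta> = 1"
    using IVT2[of Reff T 1 0] isCont_Reff Reff_0 by force
  with \<open>R\<^sub>0 > 1\<close> Reff_0
  show "\<exists>\<theta>>0. Reff \<theta> = 1" by (metis less_le less_irrefl)
qed

lemma endemic_equilibrium_iff:
  "equilibrium S V I Q R \<and> Theta n p phi I > 0 \<longleftrightarrow>
   (\<exists>\<theta>>0. Reff \<theta> = 1 \<and> (\<forall>k\<in>{1..n}. S k = S_eq \<theta> k \<and> V k = V_eq \<theta> k \<and> I k = I_eq \<theta> k
                                    \<and> Q k = Q_eq \<theta> k \<and> R k = R_eq \<theta> k))"
  (is "?eq \<longleftrightarrow> (\<exists>\<theta>>0. Reff \<theta> = 1 \<and> ?profile \<theta>)")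
proof
  assume ?eq
  with equilibrium_at_level_iff[of "Theta n p phi I" S V I Q R]
  show "\<exists>\<theta>>0. Reff \<theta> = 1 \<and> ?profile \<theta>" by (intro exI[of _ "Theta n p phi I"]) auto
next
  assume "\<exists>\<theta>>0. Reff \<theta> = 1 \<and> ?profile \<theta>"
  then obtain \<theta> where \<theta>: "\<theta> > 0" "Reff \<theta> = 1" "?profile \<theta>" by blast
  then have "\<forall>k\<in>{1..n}. I k = I_eq \<theta> k" by blast
  then have "Theta n p phi I = \<theta> * Reff \<theta>" by (rule Theta_I_eq)
  with \<theta>(2) have "Theta n p phi I = \<theta>" by simp
  with \<theta> show ?eq using equilibrium_at_level_iff[of \<theta> S V I Q R] by simp
qed

lemma endemic_equilibria_eq_profile:
  assumes "R\<^sub>0 > 1"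
  obtains \<theta> where "\<theta> > 0"
    "\<And>S V I Q R. equilibrium S V I Q R \<and> Theta n p phi I > 0 \<longleftrightarrow>
       (\<forall>k\<in>{1..n}. S k = S_eq \<theta> k \<and> V k = V_eq \<theta> k \<and> I k = I_eq \<theta> k
                    \<and> Q k = Q_eq \<theta> k \<and> R k = R_eq \<theta> k)"
proof -
  obtain \<theta> where \<theta>: "\<theta> > 0" "Reff \<theta> = 1" using assms Reff_eq_1_iff by blast
  have "equilibrium S V I Q R \<and> Theta n p phi I > 0 \<longleftrightarrow>
      (\<forall>k\<in>{1..n}. S k = S_eq \<theta> k \<and> V k = V_eq \<theta> k \<and> I k = I_eq \<theta> k
                   \<and> Q k = Q_eq \<theta> k \<and> R k = R_eq \<theta> k)" (is "?eq \<longleftrightarrow> ?profile \<theta>")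
    for S V I Q R
  proof
    assume ?eq
    then obtain \<theta>' where \<theta>': "\<theta>' > 0" "Reff \<theta>' = 1" "?profile \<theta>'"
      using endemic_equilibrium_iff by blast
    then have "\<theta>' = \<theta>" using \<theta> inj_onD[OF inj_on_Reff, of \<theta>' \<theta>] by simp
    with \<theta>' show "?profile \<theta>" by simp
  next
    assume "?profile \<theta>"
    with \<theta> show ?eq using endemic_equilibrium_iff by blast
  qed
  with \<theta>(1) show ?thesis by (rule that)
qed

lemma disease_free_equilibrium_iff:
  "equilibrium S V I Q R \<and> Theta n p phi I = 0 \<longleftrightarrow>
    (\<forall>k\<in>{1..n}. S k = S0 b d Phi mu alpha omega k \<and> V k = V0 b d Phi mu alpha omega k
                 \<and> I k = 0 \<and> Q k = 0 \<and> R k = R0comp b d Phi mu alpha omega k)"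
  using equilibrium_at_level_iff[of 0 S V I Q R] profile_at_0 by auto

lemma disease_free_equilibrium:
  "equilibrium (S0 b d Phi mu alpha omega) (V0 b d Phi mu alpha omega) (\<lambda>k. 0) (\<lambda>k. 0)
     (R0comp b d Phi mu alpha omega)"
proof -
  have "Theta n p phi (\<lambda>k. 0) = 0" unfolding Theta_def by simp
  then show ?thesis
    using disease_free_equilibrium_iff[of "S0 b d Phi mu alpha omega" "V0 b d Phi mu alpha omega"
        "\<lambda>k. 0" "\<lambda>k. 0" "R0comp b d Phi mu alpha omega"] by simp
qed

lemma disease_free_equilibrium_unique:
  "\<forall>S V I Q R. equilibrium S V I Q R \<and> Theta n p phi I = 0 \<longrightarrow>
    (\<forall>k\<in>{1..n}. S k = S0 b d Phi mu alpha omega k \<and> V k = V0 b d Phi mu alpha omega k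
                 \<and> I k = 0 \<and> Q k = 0 \<and> R k = R0comp b d Phi mu alpha omega k)"
  using disease_free_equilibrium_iff by blast

lemma endemic_equilibrium_unique:
  assumes "R\<^sub>0 > 1"
  shows "\<exists>S V I Q R. equilibrium S V I Q R
    \<and> (\<forall>k\<in>{1..n}. S k \<ge> 0 \<and> V k \<ge> 0 \<and> I k > 0 \<and> Q k \<ge> 0 \<and> R k \<ge> 0)
    \<and> Theta n p phi I > 0
    \<and> (\<forall>S' V' I' Q' R'. equilibrium S' V' I' Q' R'
         \<and> (\<forall>k\<in>{1..n}. S' k \<ge> 0 \<and> V' k \<ge> 0 \<and> I' k \<ge> 0 \<and> Q' k \<ge> 0 \<and> R' k \<ge> 0)
         \<and> Theta n p phi I' > 0 \<longrightarrow>
         (\<forall>k\<in>{1..n}. S' k = S k \<and> V' k = V k \<and> I' k = I k \<and> Q' k = Q k \<and> R' k = R k))"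
proof -
  obtain \<theta> where "\<theta> > 0" and endemic_iff: "\<And>S V I Q R. equilibrium S V I Q R \<and> Theta n p phi I > 0
    \<longleftrightarrow> (\<forall>k\<in>{1..n}. S k = S_eq \<theta> k \<and> V k = V_eq \<theta> k \<and> I k = I_eq \<theta> k
                     \<and> Q k = Q_eq \<theta> k \<and> R k = R_eq \<theta> k)"
    using endemic_equilibria_eq_profile[OF assms] by blast
  then have "equilibrium (S_eq \<theta>) (V_eq \<theta>) (I_eq \<theta>) (Q_eq \<theta>) (R_eq \<theta>)
      \<and> Theta n p phi (I_eq \<theta>) > 0" by simp
  moreover have "\<forall>k\<in>{1..n}. S_eq \<theta> k \<ge> 0 \<and> V_eq \<theta> k \<ge> 0 \<and> I_eq \<theta> k > 0
      \<and> Q_eq \<theta> k \<ge> 0 \<and> R_eq \<theta> k \<ge> 0"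
    using profile_nonneg \<open>\<theta> > 0\<close> by (simp add: less_imp_le)
  ultimately show ?thesis using endemic_iff by blast
qed

lemma endemic_equilibrium_exists_iff:
  "(\<exists>S V I Q R. equilibrium S V I Q R
      \<and> (\<forall>k\<in>{1..n}. S k \<ge> 0 \<and> V k \<ge> 0 \<and> I k \<ge> 0 \<and> Q k \<ge> 0 \<and> R k \<ge> 0)
      \<and> Theta n p phi I > 0)
    \<longleftrightarrow> R\<^sub>0 > 1"
proof
  assume "\<exists>S V I Q R. equilibrium S V I Q R
      \<and> (\<forall>k\<in>{1..n}. S k \<ge> 0 \<and> V k \<ge> 0 \<and> I k \<ge> 0 \<and> Q k \<ge> 0 \<and> R k \<ge> 0)
      \<and> Theta n p phi I > 0"
  then show "R\<^sub>0 > 1"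
    using endemic_equilibrium_iff Reff_eq_1_iff by blast
next
  assume "R\<^sub>0 > 1"
  from endemic_equilibrium_unique[OF this] show "\<exists>S V I Q R. equilibrium S V I Q R
      \<and> (\<forall>k\<in>{1..n}. S k \<ge> 0 \<and> V k \<ge> 0 \<and> I k \<ge> 0 \<and> Q k \<ge> 0 \<and> R k \<ge> 0)
      \<and> Theta n p phi I > 0"
    by (meson less_imp_le)
qed

end

theorem theorem4p1:
  fixes n :: nat and p :: "nat \<Rightarrow> real" and b d Phi :: real
    and lam phi mu :: "nat \<Rightarrow> real"
    and alpha beta gamma eta omega delta :: real
  assumes hn: "n \<ge> 1"
    and hp: "\<forall>k\<in>{1..n}. p k > 0"
    and hpsum: "(\<Sum>k=1..n. p k) = 1"
    and hbd: "b > d" and hd: "d > 0"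
    and hPhi: "Phi > 0"
    and hPhieq: "Phi = (1 / kmean n p) *
                   (\<Sum>i=1..n. real i * p i * b * Phi / (d + b * real i * Phi))"
    and hlam: "\<forall>k\<in>{1..n}. lam k > 0"
    and hphi: "\<forall>k\<in>{1..n}. phi k > 0"
    and hmu: "\<forall>k\<in>{1..n}. mu k > 0"
    and halpha: "alpha > 0" and hbeta: "beta > 0" and hgamma: "gamma > 0"
    and heta: "eta > 0" and homega: "omega > 0"
    and hdelta: "0 \<le> delta" "delta \<le> 1"
  shows
    "sviqr_equilibrium n p b d Phi lam phi mu alpha beta gamma eta omega delta
        (S0 b d Phi mu alpha omega) (V0 b d Phi mu alpha omega) (\<lambda>k. 0) (\<lambda>k. 0)
        (R0comp b d Phi mu alpha omega)
     \<and>
     (\<forall>S V I Q R.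
        sviqr_equilibrium n p b d Phi lam phi mu alpha beta gamma eta omega delta S V I Q R
        \<and> Theta n p phi I = 0 \<longrightarrow>
        (\<forall>k\<in>{1..n}. S k = S0 b d Phi mu alpha omega k \<and> V k = V0 b d Phi mu alpha omega k
                     \<and> I k = 0 \<and> Q k = 0 \<and> R k = R0comp b d Phi mu alpha omega k))
     \<and>
     ((\<exists>S V I Q R.
        sviqr_equilibrium n p b d Phi lam phi mu alpha beta gamma eta omega delta S V I Q R
        \<and> (\<forall>k\<in>{1..n}. S k \<ge> 0 \<and> V k \<ge> 0 \<and> I k \<ge> 0 \<and> Q k \<ge> 0 \<and> R k \<ge> 0)
        \<and> Theta n p phi I > 0)
      \<longleftrightarrow> R0 n p b d Phi lam phi mu alpha beta gamma omega delta > 1)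
     \<and>
     (R0 n p b d Phi lam phi mu alpha beta gamma omega delta > 1 \<longrightarrow>
      (\<exists>S V I Q R.
        sviqr_equilibrium n p b d Phi lam phi mu alpha beta gamma eta omega delta S V I Q R
        \<and> (\<forall>k\<in>{1..n}. S k \<ge> 0 \<and> V k \<ge> 0 \<and> I k > 0 \<and> Q k \<ge> 0 \<and> R k \<ge> 0)
        \<and> Theta n p phi I > 0
        \<and> (\<forall>S' V' I' Q' R'.
             sviqr_equilibrium n p b d Phi lam phi mu alpha beta gamma eta omega delta S' V' I' Q' R'
             \<and> (\<forall>k\<in>{1..n}. S' k \<ge> 0 \<and> V' k \<ge> 0 \<and> I' k \<ge> 0 \<and> Q' k \<ge> 0 \<and> R' k \<ge> 0)
             \<and> Theta n p phi I' > 0 \<longrightarrow>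
             (\<forall>k\<in>{1..n}. S' k = S k \<and> V' k = V k \<and> I' k = I k \<and> Q' k = Q k \<and> R' k = R k))))"
proof -
  interpret sviqr n p b d Phi lam phi mu alpha beta gamma eta omega delta
    using assms by unfold_locales auto
  show ?thesis
    using disease_free_equilibrium disease_free_equilibrium_unique endemic_equilibrium_exists_iff
      impI[OF endemic_equilibrium_unique]
    by (intro conjI) assumption+
qed

end
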